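(* Let $G$ be an undirected multigraph, $C\subseteq V(G)$ and $z\ge0$. If $G$ contains a $C$-certificate $H$ of order $z$, then $H$ contains (as a subgraph) a $C$-certificate $\hat H$ of order $z$ such that $\hat H-C$ has at most $\frac{|C|}{2}(z^2+2z-1)$ trees.
   Context: A feedback vertex set (FVS) of a multigraph $H$ is a set $X\subseteq V(H)$ with $H-X$ acyclic (self-loops and pairs of parallel edges count as cycles); $\mathrm{fvs}(H)$ is its minimum size. For $C\subseteq V(G)$, a $C$-certificate is a subgraph $H$ of $G$ such that $C$ is a minimum FVS of $H$; it has order $z$ if every connected component $H'$ of $H$ satisfies $\mathrm{fvs}(H')=|C\cap V(H')|\le z$. *)

theory Defs
  imports Main "HOL.Real"
begin

text \<open>Finite undirected multigraphs: edges are abstract identifiers; each edge has a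
set of one (self-loop) or two endpoints. Parallel edges are distinct identifiers with
the same endpoints.\<close>

record ('v, 'e) mgraph =
  verts :: "'v set"
  edges :: "'e set"
  ends  :: "'e \<Rightarrow> 'v set"

definition wf_mgraph :: "('v, 'e) mgraph \<Rightarrow> bool" where
  "wf_mgraph G \<longleftrightarrow> finite (verts G) \<and> finite (edges G) \<and>
     (\<forall>e\<in>edges G. ends G e \<subseteq> verts G \<and> 1 \<le> card (ends G e) \<and> card (ends G e) \<le> 2)"

definition subgraph :: "('v, 'e) mgraph \<Rightarrow> ('v, 'e) mgraph \<Rightarrow> bool" where
  "subgraph H G \<longleftrightarrow> wf_mgraph H \<and> verts H \<subseteq> verts G \<and> edges H \<subseteq> edges G \<and>
     (\<forall>e\<in>edges H. ends H e = ends G e)"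

definition delete_verts :: "('v, 'e) mgraph \<Rightarrow> 'v set \<Rightarrow> ('v, 'e) mgraph" where
  "delete_verts G X = \<lparr>verts = verts G - X, edges = {e\<in>edges G. ends G e \<inter> X = {}},
                        ends = ends G\<rparr>"

definition induce :: "('v, 'e) mgraph \<Rightarrow> 'v set \<Rightarrow> ('v, 'e) mgraph" where
  "induce G S = \<lparr>verts = S, edges = {e\<in>edges G. ends G e \<subseteq> S}, ends = ends G\<rparr>"

text \<open>A cycle: distinct vertices v_0..v_{k-1} (k>=1) and distinct edges e_0..e_{k-1}
with e_i joining v_i and v_{(i+1) mod k}. For k=1 this is a self-loop, for k=2 a pair
of parallel edges.\<close>
definition has_cycle :: "('v, 'e) mgraph \<Rightarrow> bool" where
  "has_cycle G \<longleftrightarrow> (\<exists>vs es. length vs = length es \<and> 1 \<le> length vs \<and>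
      distinct vs \<and> distinct es \<and> set vs \<subseteq> verts G \<and> set es \<subseteq> edges G \<and>
      (\<forall>i<length vs. ends G (es ! i) = {vs ! i, vs ! ((i + 1) mod length vs)}))"

definition acyclic_mg :: "('v, 'e) mgraph \<Rightarrow> bool" where
  "acyclic_mg G \<longleftrightarrow> \<not> has_cycle G"

definition is_fvs :: "('v, 'e) mgraph \<Rightarrow> 'v set \<Rightarrow> bool" where
  "is_fvs G X \<longleftrightarrow> X \<subseteq> verts G \<and> acyclic_mg (delete_verts G X)"

definition fvs :: "('v, 'e) mgraph \<Rightarrow> nat" where
  "fvs G = (LEAST k. \<exists>X. is_fvs G X \<and> card X = k)"

definition min_fvs :: "('v, 'e) mgraph \<Rightarrow> 'v set \<Rightarrow> bool" where
  "min_fvs G C \<longleftrightarrow> is_fvs G C \<and> card C = fvs G"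

definition adj :: "('v, 'e) mgraph \<Rightarrow> 'v \<Rightarrow> 'v \<Rightarrow> bool" where
  "adj G u v \<longleftrightarrow> (\<exists>e\<in>edges G. u \<in> ends G e \<and> v \<in> ends G e)"

definition components :: "('v, 'e) mgraph \<Rightarrow> 'v set set" where
  "components G = {{v \<in> verts G. (adj G)\<^sup>*\<^sup>* u v} | u. u \<in> verts G}"

definition certificate :: "('v, 'e) mgraph \<Rightarrow> 'v set \<Rightarrow> ('v, 'e) mgraph \<Rightarrow> bool" where
  "certificate G C H \<longleftrightarrow> subgraph H G \<and> min_fvs H C"

definition cert_order :: "('v, 'e) mgraph \<Rightarrow> 'v set \<Rightarrow> nat \<Rightarrow> bool" where
  "cert_order H C z \<longleftrightarrow> (\<forall>K\<in>components H.
      fvs (induce H K) = card (C \<inter> K) \<and> card (C \<inter> K) \<le> z)"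

end

theory Submission
  imports Defs
begin

text \<open>
  For every set P of at most two vertices of C, the pruned certificate keeps C and at most
  z + |P| - 1 of the trees of H - C attached to P by two distinct edges. Every tree of the pruned
  graph minus C is one of them; charging a vertex c of C with the z trees kept for {c} and with
  half of the z + 1 trees kept for {c, d}, for each of the at most z - 1 other vertices d of C in
  its component, gives the bound |C|/2 (z^2 + 2z - 1).

  C remains a minimum feedback vertex set. If Y were a smaller one, some component K of H would
  satisfy |Y \<inter> K| < |C \<inter> K| \<le> z, so H[K] has a cycle avoiding Y. That cycle is not in
  the pruned graph, hence runs through a discarded tree T, which it enters and leaves at vertices
  c, d of C. As T was discarded, z + |{c, d}| - 1 trees attached to {c, d} were kept. At most
  |Y \<inter> K| < z of them meet Y, so |{c, d}| of them avoid Y and close a cycle through c and d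
  that avoids Y.
\<close>

lemma delete_verts_simps [simp]:
  "verts (delete_verts G X) = verts G - X"
  "edges (delete_verts G X) = {e \<in> edges G. ends G e \<inter> X = {}}"
  "ends (delete_verts G X) = ends G"
  by (simp_all add: delete_verts_def)

lemma induce_simps [simp]:
  "verts (induce G V) = V"
  "edges (induce G V) = {e \<in> edges G. ends G e \<subseteq> V}"
  "ends (induce G V) = ends G"
  by (simp_all add: induce_def)

lemma delete_verts_induce: "delete_verts (induce G V) X = induce (delete_verts G X) (V - X)"
  by (auto simp: delete_verts_def induce_def)

lemma wf_mgraph_ends: "wf_mgraph G \<Longrightarrow> e \<in> edges G \<Longrightarrow> ends G e \<subseteq> verts G"
  by (simp add: wf_mgraph_def)

lemma wf_mgraph_delete_verts: "wf_mgraph G \<Longrightarrow> wf_mgraph (delete_verts G X)"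
  unfolding wf_mgraph_def by auto

lemma wf_mgraph_induce: "wf_mgraph G \<Longrightarrow> V \<subseteq> verts G \<Longrightarrow> wf_mgraph (induce G V)"
  unfolding wf_mgraph_def by (auto intro: finite_subset)

lemma wf_mgraph_ends_eq:
  assumes "wf_mgraph G" "e \<in> edges G" "y \<in> ends G e" "z \<in> ends G e" "y \<noteq> z"
  shows "ends G e = {y, z}"
proof -
  have "card (ends G e) \<le> 2" "finite (ends G e)"
    using assms(1,2) by (auto simp: wf_mgraph_def intro: finite_subset)
  moreover have "{y, z} \<subseteq> ends G e" "card {y, z} = 2"
    using assms(3-5) by auto
  ultimately show ?thesis
    by (metis card_seteq)
qed

lemma subgraph_delete_verts: "wf_mgraph G \<Longrightarrow> subgraph (delete_verts G X) G"
  by (auto simp: subgraph_def wf_mgraph_delete_verts)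

lemma subgraph_induce: "wf_mgraph G \<Longrightarrow> V \<subseteq> verts G \<Longrightarrow> subgraph (induce G V) G"
  by (auto simp: subgraph_def wf_mgraph_induce)

lemma subgraph_trans: "subgraph G1 G2 \<Longrightarrow> subgraph G2 G3 \<Longrightarrow> subgraph G1 G3"
  unfolding subgraph_def by auto

section \<open>Paths and cycles\<close>

lemma cyclic_crossing:
  assumes "a < n" "b < n" "Q a" "\<not> Q b"
  shows "\<exists>i<n. Q i \<and> \<not> Q (Suc i mod n)"
proof (rule ccontr)
  assume "\<not> ?thesis"
  then have step: "\<And>i. i < n \<Longrightarrow> Q i \<Longrightarrow> Q (Suc i mod n)"
    by blast
  have "Q ((a + m) mod n)" for m
  proof (induction m)
    case 0
    then show ?case using assms by simp
  next
    case (Suc m)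
    have "(a + Suc m) mod n = Suc ((a + m) mod n) mod n"
      by (simp add: mod_Suc_eq)
    then show ?case
      using step[OF _ Suc.IH] assms(1) by simp
  qed
  from this[of "b + n - a"] show False
    using assms by simp
qed

definition is_cycle :: "('v, 'e) mgraph \<Rightarrow> 'v list \<Rightarrow> 'e list \<Rightarrow> bool" where
  "is_cycle G vs es \<longleftrightarrow> length vs = length es \<and> 1 \<le> length vs \<and>
      distinct vs \<and> distinct es \<and> set vs \<subseteq> verts G \<and> set es \<subseteq> edges G \<and>
      (\<forall>i<length vs. ends G (es ! i) = {vs ! i, vs ! ((i + 1) mod length vs)})"

lemma has_cycle_iff: "has_cycle G \<longleftrightarrow> (\<exists>vs es. is_cycle G vs es)"
  unfolding has_cycle_def is_cycle_def ..

definition is_path :: "('v, 'e) mgraph \<Rightarrow> 'v list \<Rightarrow> 'e list \<Rightarrow> bool" where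
  "is_path G vs es \<longleftrightarrow> length vs = Suc (length es) \<and> distinct vs \<and>
     set vs \<subseteq> verts G \<and> set es \<subseteq> edges G \<and>
     (\<forall>i<length es. ends G (es ! i) = {vs ! i, vs ! Suc i})"

lemma is_path_nonempty: "is_path G vs es \<Longrightarrow> vs \<noteq> []"
  by (auto simp: is_path_def)

lemma is_path_distinct_edges:
  assumes "is_path G vs es"
  shows "distinct es"
  unfolding distinct_conv_nth
proof (intro allI impI)
  fix i j assume ij: "i < length es" "j < length es" "i \<noteq> j"
  have "distinct vs" "length vs = Suc (length es)"
    "\<forall>i<length es. ends G (es ! i) = {vs ! i, vs ! Suc i}"
    using assms by (auto simp: is_path_def)
  then have "ends G (es ! i) \<noteq> ends G (es ! j)"
    using ij by (auto simp: doubleton_eq_iff nth_eq_iff_index_eq)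
  then show "es ! i \<noteq> es ! j"
    by metis
qed

lemma is_path_edge_ends:
  assumes "is_path G vs es" "e \<in> set es"
  shows "ends G e \<subseteq> set vs"
proof -
  obtain i where "i < length es" "e = es ! i"
    using assms(2) by (metis in_set_conv_nth)
  then show ?thesis
    using assms(1) unfolding is_path_def by auto
qed

lemma is_path_singleton: "v \<in> verts G \<Longrightarrow> is_path G [v] []"
  by (simp add: is_path_def)

lemma is_path_append:
  assumes p1: "is_path G vs1 es1" and p2: "is_path G vs2 es2"
    and disj: "set vs1 \<inter> set vs2 = {}"
    and e: "e \<in> edges G" "ends G e = {last vs1, hd vs2}"
  shows "is_path G (vs1 @ vs2) (es1 @ e # es2)"
proof -
  have len: "length vs1 = Suc (length es1)"
    and ne: "vs1 \<noteq> []" "vs2 \<noteq> []"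
    using p1 p2 by (auto simp: is_path_def)
  have "ends G ((es1 @ e # es2) ! i) = {(vs1 @ vs2) ! i, (vs1 @ vs2) ! Suc i}"
    if "i < length (es1 @ e # es2)" for i
  proof -
    consider "i < length es1" | "i = length es1" | "length es1 < i"
      by linarith
    then show ?thesis
    proof cases
      case 1
      then show ?thesis using p1 len by (simp add: is_path_def nth_append)
    next
      case 2
      then show ?thesis using e len ne by (simp add: nth_append last_conv_nth hd_conv_nth)
    next
      case 3
      define j where "j = i - Suc (length es1)"
      have "i = Suc (length es1 + j)" "j < length es2"
        using 3 that unfolding j_def by simp_all
      then show ?thesis using p2 len by (simp add: is_path_def nth_append)
    qed
  qed
  then show ?thesis
    using p1 p2 disj e len unfolding is_path_def by auto
qed

lemma is_path_take:
  "is_path G vs es \<Longrightarrow> k < length vs \<Longrightarrow> is_path G (take (Suc k) vs) (take k es)"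
  unfolding is_path_def by (auto simp: distinct_take dest: in_set_takeD)

lemma is_path_rev:
  assumes "is_path G vs es"
  shows "is_path G (rev vs) (rev es)"
proof -
  have len: "length vs = Suc (length es)"
    and ends: "\<forall>i<length es. ends G (es ! i) = {vs ! i, vs ! Suc i}"
    using assms by (simp_all add: is_path_def)
  have "\<forall>i<length (rev es). ends G (rev es ! i) = {rev vs ! i, rev vs ! Suc i}"
  proof (intro allI impI)
    fix i assume "i < length (rev es)"
    then have i: "i < length es" by simp
    have "rev es ! i = es ! (length es - Suc i)"
      using i by (simp add: rev_nth)
    moreover have "rev vs ! i = vs ! Suc (length es - Suc i)"
      using i len by (simp add: rev_nth Suc_diff_Suc)
    moreover have "rev vs ! Suc i = vs ! (length es - Suc i)"
      using i len by (simp add: rev_nth)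
    ultimately show "ends G (rev es ! i) = {rev vs ! i, rev vs ! Suc i}"
      using ends i by (simp add: insert_commute)
  qed
  moreover have "length (rev vs) = Suc (length (rev es))"
    using len by simp
  moreover have "distinct (rev vs)" "set (rev vs) \<subseteq> verts G" "set (rev es) \<subseteq> edges G"
    using assms by (simp_all add: is_path_def)
  ultimately show ?thesis
    unfolding is_path_def by blast
qed

lemma is_path_close:
  assumes "is_path G vs es" "e \<in> edges G" "ends G e = {last vs, hd vs}" "e \<notin> set es"
  shows "is_cycle G vs (es @ [e])"
proof -
  have len: "length vs = Suc (length es)" and "vs \<noteq> []"
    and ends: "\<forall>i<length es. ends G (es ! i) = {vs ! i, vs ! Suc i}"
    using assms by (auto simp: is_path_def)
  have "\<forall>i<length vs. ends G ((es @ [e]) ! i) = {vs ! i, vs ! ((i + 1) mod length vs)}"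
  proof (intro allI impI)
    fix i assume i: "i < length vs"
    show "ends G ((es @ [e]) ! i) = {vs ! i, vs ! ((i + 1) mod length vs)}"
    proof (cases "i < length es")
      case True
      then show ?thesis using ends len by (simp add: nth_append)
    next
      case False
      then have "i = length es" using i len by simp
      then show ?thesis
        using assms(3) len \<open>vs \<noteq> []\<close> by (simp add: nth_append last_conv_nth hd_conv_nth insert_commute)
    qed
  qed
  moreover have "length vs = length (es @ [e])" "1 \<le> length vs"
    using len by simp_all
  moreover have "distinct (es @ [e])"
    using is_path_distinct_edges[OF assms(1)] assms(4) by simp
  moreover have "distinct vs" "set vs \<subseteq> verts G" "set (es @ [e]) \<subseteq> edges G"
    using assms(1,2) by (simp_all add: is_path_def)
  ultimately show ?thesis
    unfolding is_cycle_def by blast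
qed

lemma is_cycle_edge:
  assumes "is_cycle G vs es" "i < length vs"
  shows "es ! i \<in> edges G" "ends G (es ! i) = {vs ! i, vs ! (Suc i mod length vs)}"
proof -
  have "length es = length vs" "set es \<subseteq> edges G"
    using assms(1) by (simp_all add: is_cycle_def)
  then show "es ! i \<in> edges G"
    using assms(2) by (metis nth_mem subsetD)
  show "ends G (es ! i) = {vs ! i, vs ! (Suc i mod length vs)}"
    using assms unfolding is_cycle_def by simp
qed

lemma is_cycle_edge_ends:
  assumes "is_cycle G vs es" "e \<in> set es"
  shows "ends G e \<subseteq> set vs"
proof -
  have "length es = length vs"
    using assms(1) by (simp add: is_cycle_def)
  then obtain i where i: "i < length vs" "e = es ! i"
    using assms(2) by (metis in_set_conv_nth)
  have "Suc i mod length vs < length vs"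
    using i(1) by (intro mod_less_divisor) auto
  moreover have "ends G e = {vs ! i, vs ! (Suc i mod length vs)}"
    using is_cycle_edge(2)[OF assms(1) i(1)] i(2) by simp
  ultimately show ?thesis
    using nth_mem[OF i(1)] nth_mem[of "Suc i mod length vs" vs] by simp
qed

lemma is_cycle_mono:
  assumes "is_cycle G vs es" "set vs \<subseteq> verts G'" "set es \<subseteq> edges G'"
    "\<forall>e\<in>set es. ends G' e = ends G e"
  shows "is_cycle G' vs es"
  using assms unfolding is_cycle_def by (metis nth_mem)

lemma is_cycle_subsets: "is_cycle G vs es \<Longrightarrow> set vs \<subseteq> verts G \<and> set es \<subseteq> edges G"
  by (simp add: is_cycle_def)

lemma is_cycle_delete_verts_iff:
  "is_cycle (delete_verts G X) vs es \<longleftrightarrow> is_cycle G vs es \<and> set vs \<inter> X = {}"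
proof
  assume cycle: "is_cycle (delete_verts G X) vs es"
  then show "is_cycle G vs es \<and> set vs \<inter> X = {}"
    using is_cycle_subsets[OF cycle] is_cycle_mono[OF cycle, of G] by auto
next
  assume cycle: "is_cycle G vs es \<and> set vs \<inter> X = {}"
  then have "ends G e \<inter> X = {}" if "e \<in> set es" for e
    using is_cycle_edge_ends[OF _ that] by blast
  then have edges: "set es \<subseteq> edges (delete_verts G X)"
    unfolding delete_verts_simps using is_cycle_subsets[of G vs es] cycle by blast
  show "is_cycle (delete_verts G X) vs es"
    by (rule is_cycle_mono[of G]) (use cycle edges is_cycle_subsets[of G vs es] in auto)
qed

lemma is_cycle_induce_iff:
  assumes "V \<subseteq> verts G"
  shows "is_cycle (induce G V) vs es \<longleftrightarrow> is_cycle G vs es \<and> set vs \<subseteq> V"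
proof
  assume cycle: "is_cycle (induce G V) vs es"
  then show "is_cycle G vs es \<and> set vs \<subseteq> V"
    using is_cycle_subsets[OF cycle] is_cycle_mono[OF cycle, of G] assms by auto
next
  assume cycle: "is_cycle G vs es \<and> set vs \<subseteq> V"
  then have "ends G e \<subseteq> V" if "e \<in> set es" for e
    using is_cycle_edge_ends[OF _ that] by blast
  then have edges: "set es \<subseteq> edges (induce G V)"
    unfolding induce_simps using is_cycle_subsets[of G vs es] cycle by blast
  show "is_cycle (induce G V) vs es"
    by (rule is_cycle_mono[of G]) (use cycle edges is_cycle_subsets[of G vs es] in auto)
qed

lemma is_fvs_iff:
  "is_fvs G X \<longleftrightarrow> X \<subseteq> verts G \<and> (\<forall>vs es. is_cycle G vs es \<longrightarrow> set vs \<inter> X \<noteq> {})"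
  unfolding is_fvs_def acyclic_mg_def has_cycle_iff is_cycle_delete_verts_iff by blast

section \<open>Connected components\<close>

definition component_of :: "('v, 'e) mgraph \<Rightarrow> 'v \<Rightarrow> 'v set" where
  "component_of G u = {v \<in> verts G. (adj G)\<^sup>*\<^sup>* u v}"

lemma components_eq_image: "components G = component_of G ` verts G"
  unfolding components_def component_of_def by auto

lemma reachable_sym: "(adj G)\<^sup>*\<^sup>* u v \<Longrightarrow> (adj G)\<^sup>*\<^sup>* v u"
  by (rule sympD[OF symp_rtranclp]) (auto simp: symp_def adj_def)

lemma reachable_subgraph:
  assumes "subgraph H G" "(adj H)\<^sup>*\<^sup>* u v"
  shows "(adj G)\<^sup>*\<^sup>* u v"
proof -
  have "adj H \<le> adj G"
    using assms(1) unfolding subgraph_def adj_def by fastforce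
  then show ?thesis
    using assms(2) rtranclp_mono by blast
qed

lemma component_of_self: "u \<in> verts G \<Longrightarrow> u \<in> component_of G u"
  by (simp add: component_of_def)

lemma component_of_eq:
  assumes "v \<in> component_of G u"
  shows "component_of G v = component_of G u"
proof -
  have "(adj G)\<^sup>*\<^sup>* u v" "(adj G)\<^sup>*\<^sup>* v u"
    using assms reachable_sym by (auto simp: component_of_def)
  then show ?thesis
    unfolding component_of_def by (blast intro: rtranclp_trans)
qed

lemma component_of_in_components: "u \<in> verts G \<Longrightarrow> component_of G u \<in> components G"
  by (simp add: components_eq_image)

lemma components_eq_component_of: "K \<in> components G \<Longrightarrow> u \<in> K \<Longrightarrow> K = component_of G u"
  unfolding components_eq_image using component_of_eq by fastforce

lemma components_disjoint:
  "K1 \<in> components G \<Longrightarrow> K2 \<in> components G \<Longrightarrow> x \<in> K1 \<Longrightarrow> x \<in> K2 \<Longrightarrow> K1 = K2"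
  using components_eq_component_of by metis

lemma components_subset: "K \<in> components G \<Longrightarrow> K \<subseteq> verts G"
  unfolding components_eq_image component_of_def by auto

lemma finite_components: "finite (verts G) \<Longrightarrow> finite (components G)"
  unfolding components_eq_image by simp

lemma components_adj_closed:
  assumes "K \<in> components G" "u \<in> K" "adj G u v" "v \<in> verts G"
  shows "v \<in> K"
  using assms components_eq_component_of[OF assms(1,2)]
  by (auto simp: component_of_def intro: rtranclp.rtrancl_into_rtrancl)

lemma components_subgraph:
  assumes "subgraph H G" "K \<in> components H"
  shows "\<exists>K'\<in>components G. K \<subseteq> K'"
proof -
  obtain u where u: "u \<in> verts H" "K = component_of H u"
    using assms(2) unfolding components_eq_image by blast
  then have "u \<in> verts G" "K \<subseteq> component_of G u"
    using assms(1) reachable_subgraph[OF assms(1)]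
    by (auto simp: subgraph_def component_of_def)
  then show ?thesis
    by (blast intro: component_of_in_components)
qed

lemma card_eq_sum_components:
  assumes "finite (verts G)" "A \<subseteq> verts G"
  shows "card A = (\<Sum>K\<in>components G. card (A \<inter> K))"
proof -
  have "A = (\<Union>K\<in>components G. A \<inter> K)"
    using assms(2) component_of_self component_of_in_components by fastforce
  moreover have "card (\<Union>K\<in>components G. A \<inter> K) = (\<Sum>K\<in>components G. card (A \<inter> K))"
  proof (rule card_UN_disjoint)
    show "finite (components G)"
      using assms(1) by (rule finite_components)
    show "\<forall>K\<in>components G. finite (A \<inter> K)"
      using assms finite_subset by blast
    show "\<forall>K1\<in>components G. \<forall>K2\<in>components G. K1 \<noteq> K2 \<longrightarrow> A \<inter> K1 \<inter> (A \<inter> K2) = {}"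
      by (auto dest: components_disjoint)
  qed
  ultimately show ?thesis
    by simp
qed

lemma exists_component_card_less:
  assumes "finite (verts G)" "A \<subseteq> verts G" "B \<subseteq> verts G" "card A < card B"
  shows "\<exists>K\<in>components G. card (A \<inter> K) < card (B \<inter> K)"
proof (rule ccontr)
  assume "\<not> ?thesis"
  then have "(\<Sum>K\<in>components G. card (B \<inter> K)) \<le> (\<Sum>K\<in>components G. card (A \<inter> K))"
    by (intro sum_mono) (simp add: not_less)
  then show False
    using assms card_eq_sum_components[of G] by simp
qed

lemma component_of_induce_Union:
  assumes wf: "wf_mgraph G" and S: "S \<subseteq> components G" and K: "K \<in> S" "u \<in> K"
  shows "component_of (induce G (\<Union>S)) u = K"
proof
  let ?H = "induce G (\<Union>S)"
  have sub: "subgraph ?H G"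
    using S components_subset wf by (intro subgraph_induce) auto
  have KG: "K \<in> components G"
    using K(1) S by blast
  then have K_eq: "K = component_of G u"
    using K(2) by (rule components_eq_component_of)
  show "component_of ?H u \<subseteq> K"
  proof
    fix v assume "v \<in> component_of ?H u"
    then have "v \<in> \<Union>S" "(adj G)\<^sup>*\<^sup>* u v"
      using reachable_subgraph[OF sub] by (auto simp: component_of_def)
    then show "v \<in> K"
      using K_eq S components_subset by (auto simp: component_of_def)
  qed
  have "(adj ?H)\<^sup>*\<^sup>* u v" if "(adj G)\<^sup>*\<^sup>* u v" for v
    using that
  proof (induction rule: rtranclp_induct)
    case (step y w)
    then obtain e where e: "e \<in> edges G" "y \<in> ends G e" "w \<in> ends G e"
      by (auto simp: adj_def)
    have ends: "ends G e \<subseteq> verts G"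
      using wf e(1) by (rule wf_mgraph_ends)
    have "y \<in> K"
      using step.hyps(1) e(2) ends K_eq by (auto simp: component_of_def)
    have "x \<in> K" if "x \<in> ends G e" for x
      using components_adj_closed[OF KG \<open>y \<in> K\<close>] e that ends unfolding adj_def by blast
    then have "ends G e \<subseteq> \<Union>S"
      using K(1) by blast
    then have "adj ?H y w"
      using e unfolding adj_def by auto
    with step.IH show ?case
      by (rule rtranclp.rtrancl_into_rtrancl)
  qed simp
  then show "K \<subseteq> component_of ?H u"
    using K K_eq by (auto simp: component_of_def)
qed

lemma components_induce_Union:
  assumes wf: "wf_mgraph G" and S: "S \<subseteq> components G"
  shows "components (induce G (\<Union>S)) = S"
proof -
  let ?H = "induce G (\<Union>S)"
  have "components ?H = {component_of ?H u | u K. K \<in> S \<and> u \<in> K}"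
    unfolding components_eq_image by auto
  also have "\<dots> = S"
  proof
    show "S \<subseteq> {component_of ?H u | u K. K \<in> S \<and> u \<in> K}"
    proof
      fix K assume "K \<in> S"
      then obtain x where "x \<in> verts G" "K = component_of G x"
        using S unfolding components_eq_image by blast
      then have "x \<in> K"
        by (simp add: component_of_self)
      then show "K \<in> {component_of ?H u | u K. K \<in> S \<and> u \<in> K}"
        using component_of_induce_Union[OF wf S \<open>K \<in> S\<close>] \<open>K \<in> S\<close> by blast
    qed
  qed (use component_of_induce_Union[OF wf S] in blast)
  finally show ?thesis .
qed

lemma is_cycle_component:
  assumes cycle: "is_cycle G vs es" and K: "K \<in> components G" and meet: "set vs \<inter> K \<noteq> {}"
  shows "set vs \<subseteq> K"
proof (rule ccontr)
  assume "\<not> set vs \<subseteq> K"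
  then obtain a b where "a < length vs" "b < length vs" "vs ! a \<in> K" "vs ! b \<notin> K"
    using meet by (metis disjoint_iff in_set_conv_nth subsetI)
  then obtain i where i: "i < length vs" "vs ! i \<in> K" "vs ! (Suc i mod length vs) \<notin> K"
    using cyclic_crossing[of a "length vs" b "\<lambda>i. vs ! i \<in> K"] by blast
  have "Suc i mod length vs < length vs"
    using i(1) by (intro mod_less_divisor) auto
  then have "vs ! (Suc i mod length vs) \<in> verts G"
    using cycle is_cycle_subsets nth_mem by blast
  moreover have "adj G (vs ! i) (vs ! (Suc i mod length vs))"
    using is_cycle_edge[OF cycle i(1)] unfolding adj_def by blast
  ultimately show False
    using components_adj_closed[OF K i(2)] i(3) by blast
qed

lemma reachable_path:
  assumes wf: "wf_mgraph G" and u: "u \<in> verts G" and reach: "(adj G)\<^sup>*\<^sup>* u v"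
  shows "\<exists>vs es. is_path G vs es \<and> hd vs = u \<and> last vs = v \<and> set vs \<subseteq> component_of G u"
  using reach
proof (induction rule: rtranclp_induct)
  case base
  then show ?case
    using u is_path_singleton component_of_self by fastforce
next
  case (step y z)
  then obtain vs es where path: "is_path G vs es" "hd vs = u" "last vs = y"
    and sub: "set vs \<subseteq> component_of G u"
    by blast
  have ne: "vs \<noteq> []"
    using is_path_nonempty[OF path(1)] .
  obtain e where e: "e \<in> edges G" "y \<in> ends G e" "z \<in> ends G e"
    using step.hyps(2) unfolding adj_def by blast
  have z: "z \<in> component_of G u"
    using step.hyps e wf_mgraph_ends[OF wf] by (auto simp: component_of_def)
  show ?case
  proof (cases "z \<in> set vs")
    case True
    then obtain k where k: "k < length vs" "vs ! k = z"
      by (metis in_set_conv_nth)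
    have "is_path G (take (Suc k) vs) (take k es)"
      using is_path_take[OF path(1) k(1)] .
    moreover have "hd (take (Suc k) vs) = u"
      using path ne by simp
    moreover have "last (take (Suc k) vs) = z"
      using k by (simp add: take_Suc_conv_app_nth)
    moreover have "set (take (Suc k) vs) \<subseteq> component_of G u"
      using set_take_subset sub by (rule subset_trans)
    ultimately show ?thesis
      by blast
  next
    case False
    then have "y \<noteq> z"
      using path ne by auto
    then have "ends G e = {last vs, hd [z]}"
      using wf_mgraph_ends_eq[OF wf e] path by simp
    moreover have "z \<in> verts G"
      using z by (simp add: component_of_def)
    ultimately have "is_path G (vs @ [z]) (es @ [e])"
      using is_path_append[OF path(1) is_path_singleton] False e by auto
    then show ?thesis
      using path ne sub z by fastforce
  qed
qed

lemma component_path: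
  assumes "wf_mgraph G" "K \<in> components G" "p \<in> K" "q \<in> K"
  shows "\<exists>vs es. is_path G vs es \<and> hd vs = p \<and> last vs = q \<and> set vs \<subseteq> K"
proof -
  have K: "K = component_of G p"
    using assms(2,3) by (rule components_eq_component_of)
  then have "p \<in> verts G" "(adj G)\<^sup>*\<^sup>* p q"
    using assms(3,4) by (auto simp: component_of_def)
  then show ?thesis
    unfolding K by (rule reachable_path[OF assms(1)])
qed

section \<open>Feedback vertex sets\<close>

lemma is_fvs_induce_iff:
  assumes "V \<subseteq> verts G"
  shows "is_fvs (induce G V) X \<longleftrightarrow>
    X \<subseteq> V \<and> (\<forall>vs es. is_cycle G vs es \<longrightarrow> set vs \<subseteq> V \<longrightarrow> set vs \<inter> X \<noteq> {})"
  unfolding is_fvs_iff is_cycle_induce_iff[OF assms] by auto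

lemma fvs_le: "is_fvs G X \<Longrightarrow> fvs G \<le> card X"
  unfolding fvs_def by (rule Least_le) blast

lemma fvs_eqI:
  assumes "is_fvs G C" "\<And>Y. is_fvs G Y \<Longrightarrow> card C \<le> card Y"
  shows "fvs G = card C"
  unfolding fvs_def using assms by (intro Least_equality) auto

lemma min_fvsI:
  assumes "is_fvs G C" "\<And>Y. is_fvs G Y \<Longrightarrow> card C \<le> card Y"
  shows "min_fvs G C"
  using assms fvs_eqI unfolding min_fvs_def by metis

lemma fvs_induce_component:
  assumes wf: "wf_mgraph G" and min: "min_fvs G C" and K: "K \<in> components G"
  shows "fvs (induce G K) = card (C \<inter> K)"
proof (rule fvs_eqI)
  have C: "is_fvs G C" "card C = fvs G"
    using min by (auto simp: min_fvs_def)
  have KV: "K \<subseteq> verts G"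
    using K by (rule components_subset)
  have finC: "finite C"
    using C(1) wf finite_subset by (auto simp: is_fvs_def wf_mgraph_def)
  show "is_fvs (induce G K) (C \<inter> K)"
    using C(1) KV unfolding is_fvs_induce_iff[OF KV] is_fvs_iff[of G] by blast
  fix Z assume Z: "is_fvs (induce G K) Z"
  have "is_fvs G ((C - K) \<union> Z)"
    unfolding is_fvs_iff
  proof (intro conjI allI impI)
    show "C - K \<union> Z \<subseteq> verts G"
      using C(1) Z KV by (auto simp: is_fvs_iff is_fvs_induce_iff)
    fix vs es assume cycle: "is_cycle G vs es"
    show "set vs \<inter> (C - K \<union> Z) \<noteq> {}"
    proof (cases "set vs \<inter> K = {}")
      case True
      then show ?thesis
        using C(1) cycle unfolding is_fvs_iff by blast
    next
      case False
      then have "set vs \<subseteq> K"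
        by (rule is_cycle_component[OF cycle K])
      then show ?thesis
        using Z cycle unfolding is_fvs_induce_iff[OF KV] by blast
    qed
  qed
  then have "card C \<le> card ((C - K) \<union> Z)"
    using C fvs_le by metis
  also have "\<dots> \<le> card (C - K) + card Z"
    by (rule card_Un_le)
  finally show "card (C \<inter> K) \<le> card Z"
    using card_Int_Diff[OF finC, of K] by linarith
qed

lemma cert_order_subgraph:
  assumes sub: "subgraph H' H" and min: "min_fvs H' C" and ord: "cert_order H C z"
  shows "cert_order H' C z"
  unfolding cert_order_def
proof
  fix K' assume K': "K' \<in> components H'"
  have wf: "wf_mgraph H'"
    using sub by (simp add: subgraph_def)
  obtain K where K: "K \<in> components H" "K' \<subseteq> K"
    using components_subgraph[OF sub K'] by blast
  have "finite C"
    using min wf finite_subset by (auto simp: min_fvs_def is_fvs_def wf_mgraph_def)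
  then have "card (C \<inter> K') \<le> card (C \<inter> K)"
    using K(2) by (intro card_mono) auto
  also have "\<dots> \<le> z"
    using ord K(1) by (auto simp: cert_order_def)
  finally show "fvs (induce H' K') = card (C \<inter> K') \<and> card (C \<inter> K') \<le> z"
    using fvs_induce_component[OF wf min K'] by simp
qed

section \<open>Trees attached to a feedback vertex set\<close>

text \<open>The components of H - C are called trees: H - C is a forest when C is a feedback vertex
  set. With c = d, the predicate \<open>attached\<close> asks for two edges from c into T.\<close>

lemma is_path_delete_verts: "is_path (delete_verts G X) vs es \<Longrightarrow> is_path G vs es"
  unfolding is_path_def by auto

lemma components_delete_verts_disjoint: "T \<in> components (delete_verts H C) \<Longrightarrow> T \<inter> C = {}"
  using components_subset by fastforce

lemma components_delete_verts_boundary: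
  assumes T: "T \<in> components (delete_verts H C)"
    and e: "e \<in> edges H" "ends H e = {p, x}" and p: "p \<in> T" and x: "x \<in> verts H" "x \<notin> T"
  shows "x \<in> C"
proof (rule ccontr)
  assume "x \<notin> C"
  moreover have "p \<notin> C"
    using p components_delete_verts_disjoint[OF T] by blast
  ultimately have "adj (delete_verts H C) p x"
    using e unfolding adj_def by auto
  then have "x \<in> T"
    using components_adj_closed[OF T p] x(1) \<open>x \<notin> C\<close> by simp
  with x(2) show False ..
qed

lemma tree_path:
  assumes "wf_mgraph H" "T \<in> components (delete_verts H C)" "p \<in> T" "q \<in> T"
  shows "\<exists>vs es. is_path H vs es \<and> hd vs = p \<and> last vs = q \<and> set vs \<subseteq> T"
  using component_path[OF wf_mgraph_delete_verts[OF assms(1)] assms(2-4)] is_path_delete_verts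
  by blast

definition attached :: "('v, 'e) mgraph \<Rightarrow> 'v set \<Rightarrow> 'v \<Rightarrow> 'v \<Rightarrow> bool" where
  "attached H T c d \<longleftrightarrow> (\<exists>e1\<in>edges H. \<exists>e2\<in>edges H. e1 \<noteq> e2 \<and>
     (\<exists>p1\<in>T. \<exists>p2\<in>T. ends H e1 = {c, p1} \<and> ends H e2 = {d, p2}))"

lemma attached_sym: "attached H T c d \<Longrightarrow> attached H T d c"
  unfolding attached_def by metis

definition attached_trees :: "('v, 'e) mgraph \<Rightarrow> 'v set \<Rightarrow> 'v set \<Rightarrow> 'v set set" where
  "attached_trees H C P =
     {T \<in> components (delete_verts H C). \<exists>c d. P = {c, d} \<and> attached H T c d}"

lemma attached_trees_doubleton:
  "T \<in> attached_trees H C {c, d} \<longleftrightarrow> T \<in> components (delete_verts H C) \<and> attached H T c d"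
  unfolding attached_trees_def doubleton_eq_iff by (auto dest: attached_sym)

lemma attached_in_component:
  assumes wf: "wf_mgraph H" and T: "T \<in> components (delete_verts H C)" and att: "attached H T c d"
  shows "\<exists>K\<in>components H. insert c (insert d T) \<subseteq> K"
proof -
  obtain K where K: "K \<in> components H" "T \<subseteq> K"
    using components_subgraph[OF subgraph_delete_verts[OF wf] T] by blast
  obtain e1 e2 p1 p2 where e: "e1 \<in> edges H" "e2 \<in> edges H" "p1 \<in> T" "p2 \<in> T"
    "ends H e1 = {c, p1}" "ends H e2 = {d, p2}"
    using att unfolding attached_def by blast
  have "adj H p1 c" "adj H p2 d"
    using e unfolding adj_def by blast+
  moreover have "c \<in> verts H" "d \<in> verts H"
    using e wf_mgraph_ends[OF wf] by blast+
  ultimately have "c \<in> K" "d \<in> K"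
    using components_adj_closed[OF K(1)] e(3,4) K(2) by blast+
  then show ?thesis
    using K by blast
qed

lemma cycle_leaves_tree:
  assumes cycle: "is_cycle H vs es" and C: "is_fvs H C"
    and T: "T \<in> components (delete_verts H C)" and v: "v \<in> set vs" "v \<in> T"
  shows "\<exists>c\<in>set vs \<inter> C. \<exists>d\<in>set vs \<inter> C. attached H T c d"
proof -
  define n where "n = length vs"
  have len: "length es = n" "distinct es"
    using cycle by (simp_all add: is_cycle_def n_def)
  have "set vs \<inter> C \<noteq> {}"
    using C cycle unfolding is_fvs_iff by blast
  then obtain a where a: "a < n" "vs ! a \<in> C"
    unfolding n_def by (metis disjoint_iff in_set_conv_nth)
  obtain b where b: "b < n" "vs ! b = v"
    using v(1) unfolding n_def by (metis in_set_conv_nth)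
  have "vs ! a \<notin> T"
    using a(2) components_delete_verts_disjoint[OF T] by blast
  then obtain i j where i: "i < n" "vs ! i \<in> T" "vs ! (Suc i mod n) \<notin> T"
    and j: "j < n" "vs ! j \<notin> T" "vs ! (Suc j mod n) \<in> T"
    using cyclic_crossing[of b n a "\<lambda>k. vs ! k \<in> T"] cyclic_crossing[of a n b "\<lambda>k. vs ! k \<notin> T"]
      a(1) b v(2) by blast
  have mod: "Suc k mod n < n" if "k < n" for k
    using that by (intro mod_less_divisor) auto
  have in_vs: "vs ! k \<in> set vs" if "k < n" for k
    using that unfolding n_def by simp
  then have in_verts: "vs ! k \<in> verts H" if "k < n" for k
    using that is_cycle_subsets[OF cycle] by blast
  have ei: "es ! i \<in> edges H" "ends H (es ! i) = {vs ! i, vs ! (Suc i mod n)}"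
    using is_cycle_edge[OF cycle] i(1) unfolding n_def by auto
  have ej: "es ! j \<in> edges H" "ends H (es ! j) = {vs ! j, vs ! (Suc j mod n)}"
    using is_cycle_edge[OF cycle] j(1) unfolding n_def by auto
  have c: "vs ! (Suc i mod n) \<in> C"
    using components_delete_verts_boundary[OF T ei i(2) in_verts[OF mod[OF i(1)]] i(3)] .
  have d: "vs ! j \<in> C"
    using components_delete_verts_boundary[OF T ej(1) _ j(3) in_verts[OF j(1)] j(2)] ej(2)
    by (simp add: insert_commute)
  have "i \<noteq> j"
    using i(2) j(2) by blast
  then have "es ! i \<noteq> es ! j"
    using len i(1) j(1) by (simp add: nth_eq_iff_index_eq)
  moreover have "ends H (es ! i) = {vs ! (Suc i mod n), vs ! i}"
    using ei(2) by (simp add: insert_commute)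
  ultimately have "attached H T (vs ! (Suc i mod n)) (vs ! j)"
    unfolding attached_def using ei(1) ej i(2) j(3) by blast
  then show ?thesis
    using c d in_vs[OF mod[OF i(1)]] in_vs[OF j(1)] by blast
qed

lemma attached_loop_cycle:
  assumes wf: "wf_mgraph H" and T: "T \<in> components (delete_verts H C)"
    and c: "c \<in> C" and att: "attached H T c c"
  shows "\<exists>vs es. is_cycle H vs es \<and> set vs \<subseteq> insert c T"
proof -
  obtain e1 e2 p1 p2 where e: "e1 \<in> edges H" "e2 \<in> edges H" "e1 \<noteq> e2" "p1 \<in> T" "p2 \<in> T"
    "ends H e1 = {c, p1}" "ends H e2 = {c, p2}"
    using att unfolding attached_def by blast
  obtain vs es where path: "is_path H vs es" "hd vs = p1" "last vs = p2" "set vs \<subseteq> T"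
    using tree_path[OF wf T e(4,5)] by blast
  have cT: "c \<notin> T"
    using c components_delete_verts_disjoint[OF T] by blast
  have cV: "c \<in> verts H"
    using wf_mgraph_ends[OF wf e(1)] e(6) by blast
  have "is_path H ([c] @ vs) ([] @ e1 # es)"
    by (rule is_path_append[OF is_path_singleton[OF cV] path(1)]) (use cT path e in auto)
  then have long: "is_path H (c # vs) (e1 # es)"
    by simp
  have "e2 \<notin> set es"
    using is_path_edge_ends[OF path(1)] e(7) path(4) cT by blast
  then have new: "e2 \<notin> set (e1 # es)"
    using e(3) by simp
  have closing: "ends H e2 = {last (c # vs), hd (c # vs)}"
    using e(7) path is_path_nonempty[OF path(1)] by (simp add: insert_commute)
  have "is_cycle H (c # vs) ((e1 # es) @ [e2])"
    using is_path_close[OF long e(2) closing new] .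
  moreover have "set (c # vs) \<subseteq> insert c T"
    using path(4) by auto
  ultimately show ?thesis
    by blast
qed

lemma attached_pair_cycle:
  assumes wf: "wf_mgraph H"
    and Ta: "Ta \<in> components (delete_verts H C)" and Tb: "Tb \<in> components (delete_verts H C)"
    and disj: "Ta \<inter> Tb = {}" and cd: "c \<noteq> d" "c \<in> C" "d \<in> C"
    and att: "attached H Ta c d" "attached H Tb c d"
  shows "\<exists>vs es. is_cycle H vs es \<and> set vs \<subseteq> {c, d} \<union> Ta \<union> Tb"
proof -
  obtain e1a e2a p1a p2a where ea: "e1a \<in> edges H" "e2a \<in> edges H"
    "p1a \<in> Ta" "p2a \<in> Ta" "ends H e1a = {c, p1a}" "ends H e2a = {d, p2a}"
    using att(1) unfolding attached_def by blast
  obtain e1b e2b p1b p2b where eb: "e1b \<in> edges H" "e2b \<in> edges H" "e1b \<noteq> e2b"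
    "p1b \<in> Tb" "p2b \<in> Tb" "ends H e1b = {c, p1b}" "ends H e2b = {d, p2b}"
    using att(2) unfolding attached_def by blast
  obtain vsa esa where pa: "is_path H vsa esa" "hd vsa = p1a" "last vsa = p2a" "set vsa \<subseteq> Ta"
    using tree_path[OF wf Ta ea(3,4)] by blast
  obtain vsb esb where pb: "is_path H vsb esb" "hd vsb = p1b" "last vsb = p2b" "set vsb \<subseteq> Tb"
    using tree_path[OF wf Tb eb(4,5)] by blast
  have cdT: "c \<notin> Ta" "c \<notin> Tb" "d \<notin> Ta" "d \<notin> Tb"
    using cd components_delete_verts_disjoint[OF Ta] components_delete_verts_disjoint[OF Tb] by auto
  have cdV: "c \<in> verts H" "d \<in> verts H"
    using wf_mgraph_ends[OF wf] ea(1,2,5,6) by blast+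
  have ne: "vsa \<noteq> []" "vsb \<noteq> []"
    using pa(1) pb(1) by (simp_all add: is_path_nonempty)
  have "is_path H ([c] @ vsa) ([] @ e1a # esa)"
    by (rule is_path_append[OF is_path_singleton[OF cdV(1)] pa(1)]) (use cdT pa ea in auto)
  then have "is_path H (c # vsa) (e1a # esa)"
    by simp
  then have "is_path H ((c # vsa) @ [d]) ((e1a # esa) @ e2a # [])"
    by (rule is_path_append[OF _ is_path_singleton[OF cdV(2)]])
      (use cd cdT pa ea ne in \<open>auto simp: insert_commute\<close>)
  then have "is_path H (((c # vsa) @ [d]) @ rev vsb) (((e1a # esa) @ [e2a]) @ e2b # rev esb)"
    by (rule is_path_append[OF _ is_path_rev[OF pb(1)]])
      (use cd cdT pa pb eb disj ne in \<open>auto simp: hd_rev\<close>)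
  then have long: "is_path H (c # vsa @ d # rev vsb) (e1a # esa @ e2a # e2b # rev esb)"
    by simp
  have "e1b \<noteq> e1a" "e1b \<noteq> e2a"
    using ea(3-6) eb(4,6) cdT cd(1) disj by (auto simp: doubleton_eq_iff)
  moreover have "e1b \<notin> set esa"
    using is_path_edge_ends[OF pa(1)] eb(6) pa(4) cdT(1) by blast
  moreover have "e1b \<notin> set esb"
    using is_path_edge_ends[OF pb(1)] eb(6) pb(4) cdT(2) by blast
  ultimately have new: "e1b \<notin> set (e1a # esa @ e2a # e2b # rev esb)"
    using eb(3) by simp
  have closing: "ends H e1b = {last (c # vsa @ d # rev vsb), hd (c # vsa @ d # rev vsb)}"
    using eb(6) pb ne by (simp add: last_rev insert_commute)
  have "is_cycle H (c # vsa @ d # rev vsb) ((e1a # esa @ e2a # e2b # rev esb) @ [e1b])"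
    using is_path_close[OF long eb(1) closing new] .
  moreover have "set (c # vsa @ d # rev vsb) \<subseteq> {c, d} \<union> Ta \<union> Tb"
    using pa(4) pb(4) by auto
  ultimately show ?thesis
    by blast
qed

lemma cycle_through_attached_trees:
  assumes wf: "wf_mgraph H" and cd: "c \<in> C" "d \<in> C"
    and F: "F \<subseteq> attached_trees H C {c, d}" and card: "card {c, d} \<le> card F"
  shows "\<exists>vs es. is_cycle H vs es \<and> set vs \<subseteq> {c, d} \<union> \<Union>F"
proof (cases "c = d")
  case True
  then have "F \<noteq> {}"
    using card by auto
  then obtain T where T: "T \<in> F"
    by blast
  then have "T \<in> attached_trees H C {c, c}"
    using F True by blast
  then have "T \<in> components (delete_verts H C)" "attached H T c c"
    unfolding attached_trees_doubleton by simp_all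
  then obtain vs es where "is_cycle H vs es" "set vs \<subseteq> insert c T"
    using attached_loop_cycle[OF wf _ cd(1)] by blast
  then show ?thesis
    using T True by blast
next
  case False
  then have "2 \<le> card F"
    using card by simp
  then obtain F2 where "F2 \<subseteq> F" "card F2 = 2"
    by (rule obtain_subset_with_card_n)
  then obtain Ta Tb where T: "Ta \<in> F" "Tb \<in> F" "Ta \<noteq> Tb"
    unfolding card_2_iff by blast
  then have "Ta \<in> attached_trees H C {c, d}" "Tb \<in> attached_trees H C {c, d}"
    using F by blast+
  then have comps: "Ta \<in> components (delete_verts H C)" "Tb \<in> components (delete_verts H C)"
    and att: "attached H Ta c d" "attached H Tb c d"
    unfolding attached_trees_doubleton by simp_all
  have "Ta \<inter> Tb = {}"
    using components_disjoint[OF comps] T(3) by blast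
  then obtain vs es where "is_cycle H vs es" "set vs \<subseteq> {c, d} \<union> Ta \<union> Tb"
    using attached_pair_cycle[OF wf comps _ False cd att] by blast
  then show ?thesis
    using T by blast
qed

lemma cycle_through_unhit_attached_trees:
  assumes wf: "wf_mgraph H" and cd: "c \<in> C" "d \<in> C"
    and F: "F \<subseteq> attached_trees H C {c, d}"
    and K: "K \<in> components H" "c \<in> K" and Y: "finite Y"
    and card: "card (Y \<inter> K) + card {c, d} \<le> card F"
  shows "\<exists>vs es. is_cycle H vs es \<and> set vs \<subseteq> {c, d} \<union> \<Union>F \<and> set vs \<inter> Y \<subseteq> {c, d}"
proof -
  define unhit where "unhit = {T \<in> F. T \<inter> Y = {}}"
  have "0 < card {c, d}"
    by (simp add: card_gt_0_iff)
  then have "0 < card F"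
    using card by linarith
  then have "finite F"
    by (rule card_ge_0_finite)
  have unhit: "unhit \<subseteq> F" "finite unhit"
    using \<open>finite F\<close> finite_subset unfolding unhit_def by auto
  have comps: "T \<in> components (delete_verts H C)" "attached H T c d" if "T \<in> F" for T
    using that F attached_trees_doubleton[of T H C c d] by auto
  have "card (F - unhit) \<le> card (Y \<inter> K)"
  proof (rule card_le_if_inj_on_rel[where r = "\<lambda>T y. y \<in> T"])
    show "finite (Y \<inter> K)"
      using Y by simp
  next
    fix T assume T: "T \<in> F - unhit"
    then have "T \<in> F"
      by blast
    obtain K' where K': "K' \<in> components H" "insert c (insert d T) \<subseteq> K'"
      using attached_in_component[OF wf comps[OF \<open>T \<in> F\<close>]] by blast
    have "K' = K"
      using components_disjoint[OF K'(1) K(1) _ K(2)] K'(2) by blast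
    with K'(2) T show "\<exists>y. y \<in> Y \<inter> K \<and> y \<in> T"
      unfolding unhit_def by blast
  next
    fix T1 T2 y assume "T1 \<in> F - unhit" "T2 \<in> F - unhit" and y: "y \<in> T1" "y \<in> T2"
    then have "T1 \<in> F" "T2 \<in> F"
      by blast+
    then show "T1 = T2"
      using components_disjoint[OF comps(1) comps(1) y] by blast
  qed
  moreover have "card (F - unhit) = card F - card unhit" "card unhit \<le> card F"
    using unhit \<open>finite F\<close> by (simp_all add: card_Diff_subset card_mono)
  ultimately have "card {c, d} \<le> card unhit"
    using card by linarith
  moreover have "unhit \<subseteq> attached_trees H C {c, d}"
    using F unfolding unhit_def by blast
  ultimately obtain vs es where "is_cycle H vs es" "set vs \<subseteq> {c, d} \<union> \<Union>unhit"
    using cycle_through_attached_trees[OF wf cd] by blast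
  then show ?thesis
    unfolding unhit_def by blast
qed

section \<open>Pruning a certificate\<close>

definition pairs :: "'a set \<Rightarrow> 'a set set" where
  "pairs C = {{a, b} | a b. a \<in> C \<and> b \<in> C}"

lemma pairs_subset_Pow: "pairs C \<subseteq> Pow C"
  unfolding pairs_def by auto

lemma finite_pairs: "finite C \<Longrightarrow> finite (pairs C)"
  by (rule finite_subset[OF pairs_subset_Pow]) simp

lemma pairs_containing:
  assumes "c \<in> C"
  shows "{P \<in> pairs C. c \<in> P} = insert {c} ((\<lambda>d. {c, d}) ` (C - {c}))"
proof
  show "{P \<in> pairs C. c \<in> P} \<subseteq> insert {c} ((\<lambda>d. {c, d}) ` (C - {c}))"
  proof
    fix P assume "P \<in> {P \<in> pairs C. c \<in> P}"
    then obtain a b where "a \<in> C" "b \<in> C" "P = {a, b}" "c \<in> P"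
      unfolding pairs_def by blast
    then have "P = {c, a} \<and> a \<in> C \<or> P = {c, b} \<and> b \<in> C"
      by auto
    then show "P \<in> insert {c} ((\<lambda>d. {c, d}) ` (C - {c}))"
      by (cases "P = {c}") auto
  qed
  show "insert {c} ((\<lambda>d. {c, d}) ` (C - {c})) \<subseteq> {P \<in> pairs C. c \<in> P}"
    using assms unfolding pairs_def by blast
qed

lemma sum_pairs:
  fixes f :: "'a set \<Rightarrow> real"
  assumes C: "finite C"
  shows "(\<Sum>P\<in>pairs C. f P) = (\<Sum>c\<in>C. f {c} + (\<Sum>d\<in>C - {c}. f {c, d} / 2))"
proof -
  \<comment> \<open>spread the weight of P evenly over its elements, then sum per element\<close>
  have "f P = (\<Sum>c\<in>C. if c \<in> P then f P / card P else 0)" if P: "P \<in> pairs C" for P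
  proof -
    have "P \<subseteq> C" "P \<noteq> {}" "finite P"
      using P unfolding pairs_def by auto
    have "(\<Sum>c\<in>C. if c \<in> P then f P / card P else 0) = (\<Sum>c\<in>{c \<in> C. c \<in> P}. f P / card P)"
      using sum.inter_filter[OF C, of "\<lambda>_. f P / card P" "\<lambda>c. c \<in> P"] by simp
    also have "{c \<in> C. c \<in> P} = P"
      using \<open>P \<subseteq> C\<close> by blast
    also have "(\<Sum>c\<in>P. f P / card P) = f P"
      using \<open>P \<noteq> {}\<close> \<open>finite P\<close> by simp
    finally show ?thesis
      by simp
  qed
  then have "(\<Sum>P\<in>pairs C. f P) = (\<Sum>P\<in>pairs C. \<Sum>c\<in>C. if c \<in> P then f P / card P else 0)"
    by (rule sum.cong[OF refl])
  also have "\<dots> = (\<Sum>c\<in>C. \<Sum>P\<in>pairs C. if c \<in> P then f P / card P else 0)"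
    by (rule sum.swap)
  also have "\<dots> = (\<Sum>c\<in>C. f {c} + (\<Sum>d\<in>C - {c}. f {c, d} / 2))"
  proof (rule sum.cong[OF refl])
    fix c assume c: "c \<in> C"
    have inj: "inj_on (\<lambda>d. {c, d}) (C - {c})"
      by (auto simp: inj_on_def doubleton_eq_iff)
    have "(\<Sum>P\<in>pairs C. if c \<in> P then f P / card P else 0) = (\<Sum>P\<in>{P \<in> pairs C. c \<in> P}. f P / card P)"
      using sum.inter_filter[OF finite_pairs[OF C], of "\<lambda>P. f P / card P" "\<lambda>P. c \<in> P"] by simp
    also have "\<dots> = f {c} + (\<Sum>P\<in>(\<lambda>d. {c, d}) ` (C - {c}). f P / card P)"
      unfolding pairs_containing[OF c] using C by (subst sum.insert) auto
    also have "(\<Sum>P\<in>(\<lambda>d. {c, d}) ` (C - {c}). f P / card P) = (\<Sum>d\<in>C - {c}. f {c, d} / card {c, d})"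
      by (rule sum.reindex_cong[OF inj refl refl])
    also have "\<dots> = (\<Sum>d\<in>C - {c}. f {c, d} / 2)"
      by (rule sum.cong) auto
    finally show "(\<Sum>P\<in>pairs C. if c \<in> P then f P / card P else 0) = f {c} + (\<Sum>d\<in>C - {c}. f {c, d} / 2)" .
  qed
  finally show ?thesis .
qed

lemma ex_subsets_card_min: "\<exists>B. \<forall>P. B P \<subseteq> A P \<and> card (B P) = min (card (A P)) (n P)"
proof -
  have "\<exists>S. S \<subseteq> A P \<and> card S = min (card (A P)) (n P)" for P
    using obtain_subset_with_card_n[OF min.cobounded1] by metis
  then show ?thesis
    by (rule choice[OF allI])
qed

locale tree_pruning =
  fixes H :: "('v, 'e) mgraph" and C :: "'v set" and z :: nat and B :: "'v set \<Rightarrow> 'v set set"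
  assumes wf: "wf_mgraph H" and min: "min_fvs H C" and order: "cert_order H C z"
    and B_subset: "B P \<subseteq> attached_trees H C P"
    and card_B: "card (B P) = min (card (attached_trees H C P)) (z + card P - 1)"
begin

definition kept_trees :: "'v set set" where
  "kept_trees = (\<Union>P\<in>pairs C. B P)"

definition pruned :: "('v, 'e) mgraph" where
  "pruned = induce H (C \<union> \<Union>kept_trees)"

lemma is_fvs_C: "is_fvs H C"
  using min by (simp add: min_fvs_def)

lemma finite_verts: "finite (verts H)"
  using wf by (simp add: wf_mgraph_def)

lemma finite_C: "finite C"
  using is_fvs_C finite_verts finite_subset by (auto simp: is_fvs_def)

lemma finite_attached_trees: "finite (attached_trees H C P)"
  using finite_components[of "delete_verts H C"] finite_verts
  unfolding attached_trees_def by simp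

lemma kept_trees_subset: "kept_trees \<subseteq> components (delete_verts H C)"
  using B_subset unfolding kept_trees_def attached_trees_def by blast

lemma finite_kept_trees: "finite kept_trees"
  using finite_subset[OF kept_trees_subset finite_components] finite_verts by simp

lemma pruned_verts: "C \<union> \<Union>kept_trees \<subseteq> verts H"
  using is_fvs_C kept_trees_subset components_subset by (fastforce simp: is_fvs_def)

lemma subgraph_pruned: "subgraph pruned H"
  unfolding pruned_def using wf pruned_verts by (rule subgraph_induce)

lemma card_B_full:
  assumes "T \<in> attached_trees H C P" "T \<notin> B P"
  shows "card (B P) = z + card P - 1"
proof (rule ccontr)
  assume "card (B P) \<noteq> z + card P - 1"
  then have "card (B P) = card (attached_trees H C P)"
    using card_B[of P] by linarith
  then have "B P = attached_trees H C P"
    using card_subset_eq[OF finite_attached_trees B_subset] by blast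
  with assms show False
    by blast
qed

lemma pair_in_pairs: "c \<in> C \<Longrightarrow> d \<in> C \<Longrightarrow> {c, d} \<in> pairs C"
  unfolding pairs_def by blast

lemma B_subset_kept_trees: "c \<in> C \<Longrightarrow> d \<in> C \<Longrightarrow> B {c, d} \<subseteq> kept_trees"
  unfolding kept_trees_def using pair_in_pairs by blast

lemma cycle_outside_kept_trees:
  assumes cycle: "is_cycle H vs es" and outside: "\<not> set vs \<subseteq> C \<union> \<Union>kept_trees"
  obtains c d where "c \<in> set vs \<inter> C" "d \<in> set vs \<inter> C" "z + card {c, d} - 1 \<le> card (B {c, d})"
proof -
  obtain v where v: "v \<in> set vs" "v \<notin> C \<union> \<Union>kept_trees"
    using outside by blast
  then have "v \<in> verts (delete_verts H C)"
    using is_cycle_subsets[OF cycle] by auto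
  then have T: "component_of (delete_verts H C) v \<in> components (delete_verts H C)"
    and vT: "v \<in> component_of (delete_verts H C) v"
    by (simp_all add: component_of_in_components component_of_self)
  obtain c d where cd: "c \<in> set vs \<inter> C" "d \<in> set vs \<inter> C"
    and att: "attached H (component_of (delete_verts H C) v) c d"
    using cycle_leaves_tree[OF cycle is_fvs_C T v(1) vT] by blast
  have "component_of (delete_verts H C) v \<in> attached_trees H C {c, d}"
    using T att unfolding attached_trees_doubleton by blast
  moreover have "component_of (delete_verts H C) v \<notin> B {c, d}"
    using B_subset_kept_trees[of c d] cd v(2) vT by blast
  ultimately have "card (B {c, d}) = z + card {c, d} - 1"
    by (rule card_B_full)
  then show ?thesis
    using that[OF cd] by simp
qed

lemma cycle_avoiding_smaller_set:
  assumes Y: "Y \<subseteq> verts H" "card Y < card C"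
  obtains K vs es where "K \<in> components H" "card (Y \<inter> K) < z"
    "is_cycle H vs es" "set vs \<subseteq> K" "set vs \<inter> Y = {}"
proof -
  have CV: "C \<subseteq> verts H"
    using is_fvs_C by (simp add: is_fvs_def)
  obtain K where K: "K \<in> components H" "card (Y \<inter> K) < card (C \<inter> K)"
    using exists_component_card_less[OF finite_verts Y(1) CV Y(2)] by blast
  have KV: "K \<subseteq> verts H"
    using K(1) by (rule components_subset)
  have CK: "fvs (induce H K) = card (C \<inter> K)" "card (C \<inter> K) \<le> z"
    using order K(1) by (auto simp: cert_order_def)
  then have "\<not> is_fvs (induce H K) (Y \<inter> K)"
    using fvs_le[of "induce H K" "Y \<inter> K"] K(2) by linarith
  then obtain vs es where "is_cycle H vs es" "set vs \<subseteq> K" "set vs \<inter> Y = {}"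
    unfolding is_fvs_induce_iff[OF KV] by blast
  moreover have "card (Y \<inter> K) < z"
    using K(2) CK(2) by linarith
  ultimately show ?thesis
    using that K(1) by blast
qed

lemma is_fvs_pruned_card_ge:
  assumes Y: "is_fvs pruned Y"
  shows "card C \<le> card Y"
proof (rule ccontr)
  note Y_pruned = Y[unfolded pruned_def is_fvs_induce_iff[OF pruned_verts]]
  have YV: "Y \<subseteq> verts H"
    using Y_pruned pruned_verts by blast
  assume "\<not> card C \<le> card Y"
  then obtain K vs es where K: "K \<in> components H" "card (Y \<inter> K) < z"
    and cycle: "is_cycle H vs es" "set vs \<subseteq> K" "set vs \<inter> Y = {}"
    using cycle_avoiding_smaller_set[OF YV] by (metis not_le)
  then have "\<not> set vs \<subseteq> C \<union> \<Union>kept_trees"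
    using Y_pruned by blast
  then obtain c d where cd: "c \<in> set vs \<inter> C" "d \<in> set vs \<inter> C"
    and full: "z + card {c, d} - 1 \<le> card (B {c, d})"
    using cycle_outside_kept_trees[OF cycle(1)] by blast
  have C: "c \<in> C" "d \<in> C" and cK: "c \<in> K"
    using cd cycle(2) by auto
  have "card (Y \<inter> K) + card {c, d} \<le> card (B {c, d})"
    using full K(2) by linarith
  then obtain ws fs where ws: "is_cycle H ws fs" "set ws \<subseteq> {c, d} \<union> \<Union>(B {c, d})"
    "set ws \<inter> Y \<subseteq> {c, d}"
    using cycle_through_unhit_attached_trees[OF wf C B_subset K(1) cK finite_subset[OF YV finite_verts]]
    by blast
  moreover have "set ws \<subseteq> C \<union> \<Union>kept_trees"
    using ws(2) B_subset_kept_trees[OF C] C by blast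
  moreover have "set ws \<inter> Y = {}"
    using ws(3) cd cycle(3) by blast
  ultimately show False
    using Y_pruned by blast
qed

lemma min_fvs_pruned: "min_fvs pruned C"
proof (rule min_fvsI)
  show "is_fvs pruned C"
    unfolding pruned_def is_fvs_induce_iff[OF pruned_verts] using is_fvs_C[unfolded is_fvs_iff]
    by blast
qed (rule is_fvs_pruned_card_ge)

lemma components_pruned: "components (delete_verts pruned C) = kept_trees"
proof -
  have "T \<inter> C = {}" if "T \<in> kept_trees" for T
    using that kept_trees_subset components_delete_verts_disjoint by blast
  then have "(C \<union> \<Union>kept_trees) - C = \<Union>kept_trees"
    by blast
  then have "delete_verts pruned C = induce (delete_verts H C) (\<Union>kept_trees)"
    unfolding pruned_def delete_verts_induce by simp
  then show ?thesis
    using components_induce_Union[OF wf_mgraph_delete_verts[OF wf] kept_trees_subset] by simp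
qed

lemma B_pair_in_component:
  assumes "B {c, d} \<noteq> {}"
  shows "d \<in> component_of H c"
proof -
  obtain T where "T \<in> attached_trees H C {c, d}"
    using assms B_subset by blast
  then have "T \<in> components (delete_verts H C)" "attached H T c d"
    unfolding attached_trees_doubleton by simp_all
  then obtain K where K: "K \<in> components H" "insert c (insert d T) \<subseteq> K"
    using attached_in_component[OF wf] by blast
  then have "K = component_of H c"
    by (intro components_eq_component_of) auto
  then show ?thesis
    using K(2) by blast
qed

lemma sum_B_pairs_le:
  assumes c: "c \<in> C"
  shows "(\<Sum>d\<in>C - {c}. real (card (B {c, d})) / 2) \<le> (real z - 1) * (real z + 1) / 2"
proof -
  define N where "N = C \<inter> component_of H c - {c}"
  have cV: "c \<in> verts H"
    using c is_fvs_C by (auto simp: is_fvs_def)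
  have "real (card (B {c, d})) / 2 \<le> (if d \<in> N then (real z + 1) / 2 else 0)" if d: "d \<in> C - {c}" for d
  proof (cases "B {c, d} = {}")
    case False
    then have "d \<in> N"
      using B_pair_in_component d unfolding N_def by blast
    have "card {c, d} = 2"
      using d by auto
    then have "card (B {c, d}) \<le> z + 1"
      using card_B[of "{c, d}"] by simp
    with \<open>d \<in> N\<close> show ?thesis
      by simp
  qed simp
  then have "(\<Sum>d\<in>C - {c}. real (card (B {c, d})) / 2)
      \<le> (\<Sum>d\<in>C - {c}. if d \<in> N then (real z + 1) / 2 else 0)"
    by (rule sum_mono)
  also have "\<dots> = (\<Sum>d\<in>{d \<in> C - {c}. d \<in> N}. (real z + 1) / 2)"
    using sum.inter_filter[of "C - {c}" "\<lambda>_. (real z + 1) / 2" "\<lambda>d. d \<in> N"] finite_C by simp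
  also have "{d \<in> C - {c}. d \<in> N} = N"
    unfolding N_def by blast
  also have "(\<Sum>d\<in>N. (real z + 1) / 2) = real (card N) * ((real z + 1) / 2)"
    by simp
  also have "real (card N) \<le> real z - 1"
  proof -
    have "c \<in> C \<inter> component_of H c"
      using c component_of_self[OF cV] by blast
    moreover have "card (C \<inter> component_of H c) \<le> z"
      using order component_of_in_components[OF cV] by (auto simp: cert_order_def)
    moreover have "0 < card (C \<inter> component_of H c)"
      using calculation(1) finite_C by (auto simp: card_gt_0_iff)
    ultimately have "card N + 1 \<le> z"
      using finite_C unfolding N_def by simp
    then show ?thesis
      by linarith
  qed
  then have "real (card N) * ((real z + 1) / 2) \<le> (real z - 1) * ((real z + 1) / 2)"
    by (rule mult_right_mono) simp
  finally show ?thesis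
    by simp
qed

lemma card_kept_trees: "real (card kept_trees) \<le> real (card C) / 2 * ((real z)\<^sup>2 + 2 * real z - 1)"
proof -
  have "card kept_trees \<le> (\<Sum>P\<in>pairs C. card (B P))"
    unfolding kept_trees_def by (rule card_UN_le[OF finite_pairs[OF finite_C]])
  then have "real (card kept_trees) \<le> (\<Sum>P\<in>pairs C. real (card (B P)))"
    by (simp only: of_nat_sum[symmetric] of_nat_le_iff)
  also have "\<dots> = (\<Sum>c\<in>C. real (card (B {c})) + (\<Sum>d\<in>C - {c}. real (card (B {c, d})) / 2))"
    by (rule sum_pairs[OF finite_C])
  also have "\<dots> \<le> (\<Sum>c\<in>C. real z + (real z - 1) * (real z + 1) / 2)"
  proof (rule sum_mono)
    fix c assume "c \<in> C"
    have "card (B {c}) \<le> z"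
      using card_B[of "{c}"] by simp
    then show "real (card (B {c})) + (\<Sum>d\<in>C - {c}. real (card (B {c, d})) / 2)
        \<le> real z + (real z - 1) * (real z + 1) / 2"
      using sum_B_pairs_le[OF \<open>c \<in> C\<close>] by linarith
  qed
  also have "\<dots> = real (card C) / 2 * ((real z)\<^sup>2 + 2 * real z - 1)"
    by (simp add: field_simps power2_eq_square)
  finally show ?thesis .
qed

end

theorem lemma13:
  fixes G H :: "('v, 'e) mgraph" and C :: "'v set" and z :: nat
  assumes "wf_mgraph G"
    and "C \<subseteq> verts G"
    and "certificate G C H"
    and "cert_order H C z"
  shows "\<exists>H'. subgraph H' H \<and> certificate G C H' \<and> cert_order H' C z \<and>
           real (card {T \<in> components (delete_verts H' C). acyclic_mg (induce (delete_verts H' C) T)})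
             \<le> real (card C) / 2 * ((real z)\<^sup>2 + 2 * real z - 1)"
proof -
  have sub: "subgraph H G" and min: "min_fvs H C"
    using assms(3) by (auto simp: certificate_def)
  then have wf: "wf_mgraph H"
    by (simp add: subgraph_def)
  obtain B where B: "\<forall>P. B P \<subseteq> attached_trees H C P \<and>
      card (B P) = min (card (attached_trees H C P)) (z + card P - 1)"
    using ex_subsets_card_min[of "attached_trees H C" "\<lambda>P. z + card P - 1"] by blast
  interpret tree_pruning H C z B
    by unfold_locales (use wf min assms(4) B in simp_all)
  have "{T \<in> components (delete_verts pruned C). acyclic_mg (induce (delete_verts pruned C) T)}
      \<subseteq> kept_trees"
    unfolding components_pruned by blast
  then have "card {T \<in> components (delete_verts pruned C). acyclic_mg (induce (delete_verts pruned C) T)}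
      \<le> card kept_trees"
    by (rule card_mono[OF finite_kept_trees])
  then have count: "real (card {T \<in> components (delete_verts pruned C).
      acyclic_mg (induce (delete_verts pruned C) T)}) \<le> real (card C) / 2 * ((real z)\<^sup>2 + 2 * real z - 1)"
    using card_kept_trees by linarith
  have "certificate G C pruned"
    using subgraph_trans[OF subgraph_pruned sub] min_fvs_pruned by (simp add: certificate_def)
  moreover have "cert_order pruned C z"
    using cert_order_subgraph[OF subgraph_pruned min_fvs_pruned assms(4)] .
  ultimately show ?thesis
    using subgraph_pruned count by blast
qed

end
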